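(* Every ordered graph $F$ on $k$ vertices that does not contain a monotone path of length two is an ordered subgraph of $H_k$.
   Context: An ordered graph is a graph with a totally ordered vertex set. A monotone path of length two in $F$ consists of vertices $u<v<w$ with $uv,vw\in E(F)$. $H_k$ is the ordered graph with vertex set $[k]\times\{0,1\}$, ordered lexicographically ($(a,i)<(b,j)$ iff $a<b$, or $a=b$ and $i<j$), and edge set $\{(x,0)(y,1): x\le y\}$. $F$ is an ordered subgraph of $H$ if there is an injective order-preserving map $V(F)\to V(H)$ sending edges of $F$ to edges of $H$. *)

theory Defs
  imports Main
begin

definition ordered_graph :: "'a::linorder set \<Rightarrow> ('a \<Rightarrow> 'a \<Rightarrow> bool) \<Rightarrow> bool" where
  "ordered_graph V E \<longleftrightarrow> finite V \<and> (\<forall>u v. E u v \<longrightarrow> u \<in> V \<and> v \<in> V)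
     \<and> (\<forall>u v. E u v \<longrightarrow> E v u) \<and> (\<forall>u. \<not> E u u)"

definition has_monotone_2path :: "'a::linorder set \<Rightarrow> ('a \<Rightarrow> 'a \<Rightarrow> bool) \<Rightarrow> bool" where
  "has_monotone_2path V E \<longleftrightarrow>
     (\<exists>u\<in>V. \<exists>v\<in>V. \<exists>w\<in>V. u < v \<and> v < w \<and> E u v \<and> E v w)"

definition H_vert :: "nat \<Rightarrow> (nat \<times> nat) set" where
  "H_vert k = {1..k} \<times> {0, 1}"

definition H_less :: "nat \<times> nat \<Rightarrow> nat \<times> nat \<Rightarrow> bool" where
  "H_less p q \<longleftrightarrow> fst p < fst q \<or> (fst p = fst q \<and> snd p < snd q)"

definition H_edge :: "nat \<Rightarrow> nat \<times> nat \<Rightarrow> nat \<times> nat \<Rightarrow> bool" where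
  "H_edge k p q \<longleftrightarrow> p \<in> H_vert k \<and> q \<in> H_vert k \<and>
     ((snd p = 0 \<and> snd q = 1 \<and> fst p \<le> fst q) \<or> (snd q = 0 \<and> snd p = 1 \<and> fst q \<le> fst p))"

definition ordered_subgraph_H :: "'a::linorder set \<Rightarrow> ('a \<Rightarrow> 'a \<Rightarrow> bool) \<Rightarrow> nat \<Rightarrow> bool" where
  "ordered_subgraph_H V E k \<longleftrightarrow> (\<exists>f. inj_on f V \<and> f ` V \<subseteq> H_vert k
     \<and> (\<forall>u\<in>V. \<forall>v\<in>V. u < v \<longrightarrow> H_less (f u) (f v))
     \<and> (\<forall>u\<in>V. \<forall>v\<in>V. E u v \<longrightarrow> H_edge k (f u) (f v)))"

end

theory Submission imports Defs begin

text \<open>Map a vertex v to (r, s), where r is the rank of v in V and s = 1 exactly when v has a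
neighbour to its left. For an edge uv with u < v, v gets s = 1,
and u gets s = 0, because a neighbour of u to the left of u would close a monotone path of
length two ending in v; as the rank of u is below that of v, uv is sent to an edge of H_k.\<close>

definition rank :: "'a::linorder set \<Rightarrow> 'a \<Rightarrow> nat" where
  "rank V v = card {x\<in>V. x \<le> v}"

lemma rank_less:
  fixes V :: "'a::linorder set"
  assumes "finite V" "u \<in> V" "v \<in> V" "u < v"
  shows "rank V u < rank V v"
  unfolding rank_def
proof (rule psubset_card_mono)
  show "finite {x\<in>V. x \<le> v}" using assms by simp
  have "v \<notin> {x\<in>V. x \<le> u}" using assms by auto
  then show "{x\<in>V. x \<le> u} \<subset> {x\<in>V. x \<le> v}" using assms by auto
qed

lemma rank_in_range:
  fixes V :: "'a::linorder set"
  assumes "finite V" "v \<in> V"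
  shows "rank V v \<in> {1..card V}"
proof -
  have "rank V v \<noteq> 0" using assms by (auto simp: rank_def)
  moreover have "rank V v \<le> card V" unfolding rank_def using assms by (intro card_mono) auto
  ultimately show ?thesis by simp
qed

definition has_left_neighbour :: "'a::linorder set \<Rightarrow> ('a \<Rightarrow> 'a \<Rightarrow> bool) \<Rightarrow> 'a \<Rightarrow> bool" where
  "has_left_neighbour V E v \<longleftrightarrow> (\<exists>u\<in>V. u < v \<and> E u v)"

definition H_embedding :: "'a::linorder set \<Rightarrow> ('a \<Rightarrow> 'a \<Rightarrow> bool) \<Rightarrow> 'a \<Rightarrow> nat \<times> nat" where
  "H_embedding V E v = (rank V v, if has_left_neighbour V E v then 1 else 0)"

lemma H_less_irrefl: "\<not> H_less p p"
  by (simp add: H_less_def)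

lemma H_edge_sym: "H_edge k p q \<Longrightarrow> H_edge k q p"
  by (auto simp: H_edge_def)

lemma inj_on_if_strict_mono_H_less:
  fixes V :: "'a::linorder set"
  assumes "\<And>u v. u \<in> V \<Longrightarrow> v \<in> V \<Longrightarrow> u < v \<Longrightarrow> H_less (f u) (f v)"
  shows "inj_on f V"
proof (rule inj_onI)
  fix u v assume "u \<in> V" "v \<in> V" "f u = f v"
  then show "u = v"
    using assms[of u v] assms[of v u] H_less_irrefl[of "f v"] by (cases u v rule: linorder_cases) auto
qed

lemma H_embedding_less:
  fixes V :: "'a::linorder set"
  assumes "finite V" "u \<in> V" "v \<in> V" "u < v"
  shows "H_less (H_embedding V E u) (H_embedding V E v)"
  using rank_less[OF assms] by (simp add: H_less_def H_embedding_def)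

lemma H_embedding_in_H_vert:
  fixes V :: "'a::linorder set"
  assumes "finite V" "v \<in> V"
  shows "H_embedding V E v \<in> H_vert (card V)"
  using rank_in_range[OF assms] by (simp add: H_embedding_def H_vert_def)

lemma H_embedding_edge:
  fixes V :: "'a::linorder set"
  assumes "ordered_graph V E" "\<not> has_monotone_2path V E" "E u v" "u < v"
  shows "H_edge (card V) (H_embedding V E u) (H_embedding V E v)"
proof -
  have fin: "finite V" and uv: "u \<in> V" "v \<in> V"
    using assms(1,3) by (auto simp: ordered_graph_def)
  have "\<not> has_left_neighbour V E u"
  proof
    assume "has_left_neighbour V E u"
    then obtain t where "t \<in> V" "t < u" "E t u" by (auto simp: has_left_neighbour_def)
    then have "has_monotone_2path V E"
      using assms(3,4) uv unfolding has_monotone_2path_def by blast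
    with assms(2) show False ..
  qed
  moreover have "has_left_neighbour V E v"
    using assms(3,4) uv by (auto simp: has_left_neighbour_def)
  moreover have "rank V u \<le> rank V v"
    using rank_less[OF fin uv assms(4)] by simp
  moreover have "H_embedding V E u \<in> H_vert (card V)" "H_embedding V E v \<in> H_vert (card V)"
    using H_embedding_in_H_vert[OF fin] uv by auto
  ultimately show ?thesis by (simp add: H_edge_def H_embedding_def)
qed

theorem lemma4p1:
  fixes V :: "'a::linorder set" and E :: "'a \<Rightarrow> 'a \<Rightarrow> bool" and k :: nat
  assumes "ordered_graph V E"
    and "card V = k"
    and "\<not> has_monotone_2path V E"
  shows "ordered_subgraph_H V E k"
proof -
  let ?f = "H_embedding V E"
  have fin: "finite V" and sym: "\<And>u v. E u v \<Longrightarrow> E v u" and irr: "\<And>u. \<not> E u u"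
    using assms(1) by (auto simp: ordered_graph_def)
  have mono: "H_less (?f u) (?f v)" if "u \<in> V" "v \<in> V" "u < v" for u v
    using H_embedding_less[OF fin that] .
  have edge: "H_edge k (?f u) (?f v)" if "E u v" for u v
  proof -
    have "u \<noteq> v" using irr that by auto
    then consider "u < v" | "v < u" by fastforce
    then show ?thesis
    proof cases
      case 1
      then show ?thesis using H_embedding_edge[OF assms(1,3) that] assms(2) by simp
    next
      case 2
      then show ?thesis
        using H_embedding_edge[OF assms(1,3) sym[OF that]] H_edge_sym assms(2) by blast
    qed
  qed
  have "?f ` V \<subseteq> H_vert k" using H_embedding_in_H_vert[OF fin] assms(2) by blast
  then show ?thesis
    unfolding ordered_subgraph_H_def
    using inj_on_if_strict_mono_H_less[of V ?f] mono edge by blast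
qed

end
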